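(* Let $L$ be an $r\times m$ matrix of integers of full rank $r$. There exist a finite set $\Lambda^*$ of positive real numbers and an integer $p_0$, both depending only on $L$, such that for every integer $p\ge p_0$ we have $\{\lambda(j): j/p\in J(L,p)\}\subset\Lambda^*$.
   Context: $\mathbb{T}=\mathbb{R}/\mathbb{Z}$, and $\mathbb{T}^m$ is identified with $[0,1)^m$ with coordinatewise addition mod 1. $\ker_{\mathbb{T}}L=\{x\in\mathbb{T}^m:Lx=0\}$ with normalized Haar probability measure $\mu_L$. For $j\in\mathbb{Z}_p^m$ with coordinates $j(i)\in\{0,\ldots,p-1\}$, $j/p=(j(1)/p,\ldots,j(m)/p)\in\mathbb{T}^m$, and $\lambda(j)=p^{m-r}\mu_L\big((j/p+[0,1/p)^m)\cap\ker_{\mathbb{T}}L\big)$. $J(L,p)=\{j/p:\ j\in\mathbb{Z}_p^m,\ \mu_L\big((j/p+[0,1/p)^m)\cap\ker_{\mathbb{T}}L\big)>0\}$. *)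

theory Defs
  imports "HOL-Analysis.Analysis" "HOL-Probability.Probability"
begin

text \<open>The torus T^m is identified with [0,1)^m; points are represented by
  vectors in real^'m, and addition on the torus is coordinatewise addition mod 1.\<close>

definition torus :: "(real^'m) set" where
  "torus = {x. \<forall>i. 0 \<le> x$i \<and> x$i < 1}"

definition tplus :: "real^'m \<Rightarrow> real^'m \<Rightarrow> real^'m" where
  "tplus a x = (\<chi> i. frac (a$i + x$i))"

definition realmat :: "int^'m^'r \<Rightarrow> real^'m^'r" where
  "realmat L = (\<chi> i j. real_of_int (L$i$j))"

text \<open>ker_T L = {x in T^m. Lx = 0 in T^r}, i.e. every coordinate of Lx is an integer.\<close>
definition torus_ker :: "int^'m^'r \<Rightarrow> (real^'m) set" where
  "torus_ker L = {x \<in> torus. \<forall>i. (realmat L *v x)$i \<in> \<int>}"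

text \<open>Normalized Haar probability measure on the compact group ker_T L, realised as a
  Borel measure on real^'m concentrated on ker_T L: the (unique) Borel probability measure
  carried by ker_T L that is invariant under all torus translations by elements of ker_T L.\<close>
definition haar_ker :: "int^'m^'r \<Rightarrow> (real^'m) measure" where
  "haar_ker L = (THE M. sets M = sets borel \<and> prob_space M \<and>
      emeasure M (torus_ker L) = 1 \<and>
      (\<forall>a\<in>torus_ker L. distr M borel (tplus a) = M))"

definition mu_L :: "int^'m^'r \<Rightarrow> (real^'m) set \<Rightarrow> real" where
  "mu_L L S = measure (haar_ker L) S"

definition Zp_grid :: "nat \<Rightarrow> (nat^'m) set" where
  "Zp_grid p = {j. \<forall>i. j$i < p}"

definition cell :: "nat \<Rightarrow> nat^'m \<Rightarrow> (real^'m) set" where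
  "cell p j = {x. \<forall>i. real (j$i) / real p \<le> x$i \<and> x$i < real (j$i) / real p + 1 / real p}"

definition lam :: "int^'m^'r \<Rightarrow> nat \<Rightarrow> nat^'m \<Rightarrow> real" where
  "lam L p j = real p ^ (CARD('m) - CARD('r)) * mu_L L (cell p j \<inter> torus_ker L)"

definition div_vec :: "nat^'m \<Rightarrow> nat \<Rightarrow> real^'m" where
  "div_vec j p = (\<chi> i. real (j$i) / real p)"

definition J_set :: "int^'m^'r \<Rightarrow> nat \<Rightarrow> (real^'m) set" where
  "J_set L p = {div_vec j p | j. j \<in> Zp_grid p \<and> mu_L L (cell p j \<inter> torus_ker L) > 0}"

end

theory Submission
  imports Defs
begin

text \<open>Choose pivot columns \<open>I\<close> of \<open>L\<close> and a right inverse \<open>R\<close> of \<open>L\<close> whose rows vanish off \<open>I\<close>.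
  Every point of \<open>ker\<^sub>T L\<close> is \<open>frac (y + u - R L y)\<close> with \<open>y\<close> vanishing on \<open>I\<close> and \<open>u\<close> from the
  finite set of points of \<open>[0,1)\<^sup>m\<close> supported on \<open>I\<close> with \<open>L u\<close> integral. Pushing the uniform
  measure on these offsets times Lebesgue measure on \<open>[0,1)\<^sup>m\<close> forward along this chart gives a
  probability measure on the kernel invariant under kernel translations (piecewise a euclidean
  translation combined with a permutation of the offsets), hence the Haar measure.

  Rescaling the free coordinates of the cell \<open>j/p + [0,1/p)\<^sup>m\<close> to \<open>[0,1)\<close> cancels the factor
  \<open>p^(m-r)\<close>, and \<open>\<lambda>(j)\<close> becomes an average over the offsets of sums of Lebesgue measures of
  slabs \<open>{t. 0 \<le> z\<^sub>i - (R L t')\<^sub>i < 1 for i \<in> I}\<close> (\<open>t'\<close> the free part of \<open>t\<close>), indexed by integral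
  points \<open>z\<close> from a finite set that depends neither on \<open>p\<close> nor on \<open>j\<close>. So \<open>\<lambda>\<close> takes only
  finitely many values.\<close>

lemma frac_borel_measurable[measurable]: "(frac :: real \<Rightarrow> real) \<in> borel_measurable borel"
  unfolding frac_def by measurable

lemma borel_measurable_vec_lambda[measurable (raw)]:
  fixes f :: "'a \<Rightarrow> 'n::finite \<Rightarrow> real"
  assumes "\<And>i. (\<lambda>x. f x i) \<in> borel_measurable M"
  shows "(\<lambda>x. \<chi> i. f x i) \<in> borel_measurable M"
  using assms
  by (subst borel_measurable_euclidean_space)
     (auto simp: Basis_vec_def cart_eq_inner_axis[symmetric] inner_axis)

lemma matrix_vector_mult_borel_measurable[measurable]:
  "(\<lambda>x. (B :: real^'n^'k) *v x) \<in> borel_measurable borel"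
  by (intro borel_measurable_continuous_onI linear_continuous_on matrix_vector_mul_bounded_linear)

lemma tplus_comm: "tplus a x = tplus x a"
  by (simp add: tplus_def add.commute)

lemma torus_sets[measurable]: "torus \<in> sets borel"
  unfolding torus_def by measurable

definition frac_vec :: "real^'n \<Rightarrow> real^'n" where
  "frac_vec y = (\<chi> i. frac (y$i))"

definition int_vec :: "real^'n \<Rightarrow> bool" where
  "int_vec y \<longleftrightarrow> (\<forall>k. y$k \<in> \<int>)"

lemma tplus_eq_frac_vec: "tplus a x = frac_vec (a + x)"
  by (simp add: tplus_def frac_vec_def)

lemma frac_vec_borel_measurable[measurable]: "frac_vec \<in> borel_measurable borel"
  unfolding frac_vec_def by measurable

lemma tplus_borel_measurable[measurable]: "tplus a \<in> borel_measurable borel"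
  unfolding tplus_eq_frac_vec[abs_def] by measurable

lemma tplus_pair_borel_measurable:
  "(\<lambda>(x, y). tplus x y) \<in> borel_measurable (borel \<Otimes>\<^sub>M borel)"
  unfolding tplus_eq_frac_vec by measurable

lemma frac_vec_add_int_vec: "int_vec n \<Longrightarrow> frac_vec (y + n) = frac_vec y"
  by (simp add: frac_vec_def int_vec_def vec_eq_iff frac_add_int_right)

lemma frac_vec_add_frac_vec: "frac_vec (z + frac_vec y) = frac_vec (z + y)"
  by (simp add: frac_vec_def vec_eq_iff)

lemma int_vec_diff_frac_vec: "int_vec (y - frac_vec y)"
  by (simp add: int_vec_def frac_vec_def frac_def)

lemma frac_vec_in_torus: "frac_vec y \<in> torus"
  by (simp add: torus_def frac_vec_def frac_lt_1)

lemma int_vec_add: "int_vec x \<Longrightarrow> int_vec y \<Longrightarrow> int_vec (x + y)"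
  and int_vec_diff: "int_vec x \<Longrightarrow> int_vec y \<Longrightarrow> int_vec (x - y)"
  and int_vec_scale_nat: "int_vec x \<Longrightarrow> int_vec (real p *\<^sub>R x)"
  by (simp_all add: int_vec_def)

lemma int_vec_realmat_mult: "int_vec n \<Longrightarrow> int_vec (realmat L *v n)"
  unfolding int_vec_def
  by (auto simp: matrix_vector_mult_def realmat_def intro!: Ints_sum Ints_mult)

lemma mem_torus_ker_iff: "x \<in> torus_ker L \<longleftrightarrow> x \<in> torus \<and> int_vec (realmat L *v x)"
  by (simp add: torus_ker_def int_vec_def)

lemma torus_ker_sets[measurable]: "torus_ker L \<in> sets borel"
proof -
  have "torus_ker L = {x \<in> torus. \<forall>i. frac ((realmat L *v x)$i) = 0}"
    by (simp add: torus_ker_def)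
  also have "\<dots> \<in> sets borel" by measurable
  finally show ?thesis .
qed

lemma int_vec_realmat_mult_frac_vec:
  "int_vec (realmat L *v y) \<Longrightarrow> int_vec (realmat L *v frac_vec y)"
proof -
  assume y: "int_vec (realmat L *v y)"
  have "realmat L *v frac_vec y = realmat L *v y - realmat L *v (y - frac_vec y)"
    by (simp add: matrix_vector_mult_diff_distrib)
  then show ?thesis
    using int_vec_diff[OF y int_vec_realmat_mult[OF int_vec_diff_frac_vec]] by simp
qed

lemma finite_bounded_int_vecs: "finite {k::real^'n. \<forall>j. k$j \<in> \<int> \<and> \<bar>k$j\<bar> \<le> M}"
proof -
  let ?B = "Pi\<^sub>E UNIV (\<lambda>_::'n. {-\<lceil>M\<rceil>..\<lceil>M\<rceil>})"
  have "{k::real^'n. \<forall>j. k$j \<in> \<int> \<and> \<bar>k$j\<bar> \<le> M} \<subseteq> (\<lambda>f. \<chi> j. real_of_int (f j)) ` ?B"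
  proof
    fix k :: "real^'n" assume k: "k \<in> {k. \<forall>j. k$j \<in> \<int> \<and> \<bar>k$j\<bar> \<le> M}"
    define f where "f j = \<lfloor>k$j\<rfloor>" for j
    have kj: "real_of_int (f j) = k$j" for j using k by (auto simp: f_def elim!: Ints_cases)
    have "\<bar>f j\<bar> \<le> \<lceil>M\<rceil>" for j
    proof -
      have "\<bar>k$j\<bar> \<le> M" using k by simp
      then have "\<bar>k$j\<bar> \<le> real_of_int \<lceil>M\<rceil>" using le_of_int_ceiling[of M] by linarith
      then show ?thesis using kj[of j] by linarith
    qed
    then have "f \<in> ?B" by (force simp: abs_le_iff)
    moreover have "k = (\<chi> j. real_of_int (f j))" using kj by (simp add: vec_eq_iff)
    ultimately show "k \<in> (\<lambda>f. \<chi> j. real_of_int (f j)) ` ?B" by blast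
  qed
  moreover have "finite ?B" by (rule finite_PiE) auto
  ultimately show ?thesis by (rule finite_subset[OF _ finite_imageI])
qed

definition abs_entry_sum :: "real^'n^'k \<Rightarrow> real" where
  "abs_entry_sum B = (\<Sum>i\<in>UNIV. \<Sum>l\<in>UNIV. \<bar>B$i$l\<bar>)"

lemma abs_matrix_vector_mult_le:
  assumes x: "\<And>l. \<bar>x$l\<bar> \<le> c"
  shows "\<bar>(B *v x)$i\<bar> \<le> abs_entry_sum B * c"
proof -
  have c: "0 \<le> c" using x[of undefined] by simp
  have "\<bar>(B *v x)$i\<bar> = \<bar>\<Sum>l\<in>UNIV. B$i$l * x$l\<bar>" by (simp add: matrix_vector_mult_def)
  also have "\<dots> \<le> (\<Sum>l\<in>UNIV. \<bar>B$i$l\<bar> * c)"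
    by (rule order_trans[OF sum_abs sum_mono]) (simp add: abs_mult mult_left_mono x)
  also have "\<dots> = (\<Sum>l\<in>UNIV. \<bar>B$i$l\<bar>) * c" by (simp add: sum_distrib_right)
  also have "\<dots> \<le> abs_entry_sum B * c"
    unfolding abs_entry_sum_def by (rule mult_right_mono[OF member_le_sum c]) (auto intro: sum_nonneg)
  finally show ?thesis .
qed

lemma abs_entry_sum_nonneg: "0 \<le> abs_entry_sum B"
  by (simp add: abs_entry_sum_def sum_nonneg)

lemma emeasure_lborel_translate:
  fixes c :: "'a::euclidean_space"
  assumes "S \<in> sets borel"
  shows "emeasure lborel ((\<lambda>x. x + c) -` S) = emeasure lborel S"
proof -
  have "emeasure lborel S = emeasure (distr lborel borel ((+) c)) S"
    by (simp add: lborel_distr_plus)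
  also have "\<dots> = emeasure lborel ((+) c -` S)"
    using assms by (simp add: emeasure_distr)
  moreover have "(+) c = (\<lambda>x. x + c)" by (auto simp: add.commute)
  ultimately show ?thesis by simp
qed

lemma emeasure_lborel_diagonal_affine:
  fixes d :: "'n::finite \<Rightarrow> real" and s :: "real^'n"
  assumes d: "\<And>i. d i \<noteq> 0" and X: "X \<in> sets borel"
  shows "emeasure lborel X =
    ennreal (\<Prod>i\<in>UNIV. \<bar>d i\<bar>) * emeasure lborel ((\<lambda>x. \<chi> i. s$i + d i * x$i) -` X)"
proof -
  have Basis: "(Basis :: (real^'n) set) = (\<lambda>i. axis i 1) ` UNIV"
    by (auto simp: Basis_vec_def)
  have inj: "inj (\<lambda>i::'n. axis i (1::real))"
    by (auto simp: inj_on_def axis_eq_axis)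
  define c :: "real^'n \<Rightarrow> real" where "c b = (\<Sum>i\<in>UNIV. d i * b$i)" for b
  have c_axis: "c (axis i 1) = d i" for i
    by (simp add: c_def axis_def if_distrib cong: if_cong)
  have T: "s + (\<Sum>b\<in>Basis. (c b * (x \<bullet> b)) *\<^sub>R b) = (\<chi> i. s$i + d i * x$i)" for x :: "real^'n"
  proof -
    have "(\<Sum>b\<in>Basis. (c b * (x \<bullet> b)) *\<^sub>R b) = (\<Sum>i\<in>UNIV. (d i * x$i) *\<^sub>R axis i (1::real))"
      unfolding Basis
      by (subst sum.reindex[OF inj]) (simp add: c_axis cart_eq_inner_axis[symmetric] o_def)
    also have "\<dots> = (\<chi> i. d i * x$i)"
      by (simp add: vec_eq_iff axis_def if_distrib cong: if_cong)
    finally show ?thesis by (simp add: vec_eq_iff)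
  qed
  have "(\<Prod>b\<in>Basis. \<bar>c b\<bar>) = (\<Prod>i\<in>UNIV. \<bar>d i\<bar>)"
    unfolding Basis by (subst prod.reindex[OF inj]) (simp add: c_axis o_def)
  moreover have "\<And>b. b \<in> Basis \<Longrightarrow> c b \<noteq> 0"
    using d by (auto simp: Basis c_axis)
  ultimately have eq: "lborel = density (distr lborel borel (\<lambda>x. \<chi> i. s$i + d i * x$i)) (\<lambda>_. (\<Prod>i\<in>UNIV. \<bar>d i\<bar>))"
    using lborel_affine_euclidean[of c s] by (simp add: T)
  have "emeasure lborel X = emeasure (density (distr lborel borel (\<lambda>x. \<chi> i. s$i + d i * x$i)) (\<lambda>_. (\<Prod>i\<in>UNIV. \<bar>d i\<bar>))) X"
    using eq by simp
  also have "\<dots> = ennreal (\<Prod>i\<in>UNIV. \<bar>d i\<bar>) * emeasure (distr lborel borel (\<lambda>x. \<chi> i. s$i + d i * x$i)) X"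
    using X by (simp add: emeasure_density nn_integral_cmult_indicator)
  also have "\<dots> = ennreal (\<Prod>i\<in>UNIV. \<bar>d i\<bar>) * emeasure lborel ((\<lambda>x. \<chi> i. s$i + d i * x$i) -` X)"
    using X by (simp add: emeasure_distr)
  finally show ?thesis .
qed

lemma emeasure_lborel_torus: "emeasure lborel (torus :: (real^'m) set) = 1"
proof -
  have box: "box 0 (vec 1 :: real^'m) \<subseteq> torus" and cbox: "torus \<subseteq> cbox 0 (vec 1 :: real^'m)"
    by (auto simp: mem_box_cart torus_def less_imp_le)
  have "emeasure lborel (box 0 (vec 1 :: real^'m)) = 1"
    by (auto simp: emeasure_lborel_box_eq Basis_vec_def inner_axis intro!: prod.neutral)
  moreover have "emeasure lborel (cbox 0 (vec 1 :: real^'m)) = 1"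
    by (auto simp: emeasure_lborel_cbox_eq Basis_vec_def inner_axis intro!: prod.neutral)
  ultimately show ?thesis
    using emeasure_mono[OF box, of lborel] emeasure_mono[OF cbox, of lborel] by (simp add: torus_sets)
qed

lemma prob_space_uniform_torus: "prob_space (uniform_measure lborel (torus :: (real^'m) set))"
  by (rule prob_space_uniform_measure) (simp_all add: emeasure_lborel_torus)

section \<open>Translations of the torus\<close>

text \<open>\<open>wrap_source a W\<close> is the part of the torus on which translation by \<open>a\<close> wraps around exactly
  in the coordinates \<open>W\<close>; there it is the euclidean translation by \<open>wrap_shift a W\<close>.\<close>

definition wrap_shift :: "real^'n \<Rightarrow> 'n set \<Rightarrow> real^'n" where
  "wrap_shift a W = (\<chi> i. frac (a$i) - (if i \<in> W then 1 else 0))"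

definition wrap_source :: "real^'n \<Rightarrow> 'n set \<Rightarrow> (real^'n) set" where
  "wrap_source a W = {x \<in> torus. \<forall>i. i \<in> W \<longleftrightarrow> 1 \<le> x$i + frac (a$i)}"

definition wrap_target :: "real^'n \<Rightarrow> 'n set \<Rightarrow> (real^'n) set" where
  "wrap_target a W = {y \<in> torus. \<forall>i. i \<in> W \<longleftrightarrow> y$i < frac (a$i)}"

lemma wrap_sets[measurable]: "wrap_source a W \<in> sets borel" "wrap_target a W \<in> sets borel"
  unfolding wrap_source_def wrap_target_def by measurable

lemma tplus_on_wrap_source:
  assumes "x \<in> wrap_source a W"
  shows "tplus a x = x + wrap_shift a W"
proof -
  have "frac (a$i + x$i) = x$i + (frac (a$i) - (if i \<in> W then 1 else 0))" for i
  proof -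
    have "0 \<le> x$i" "x$i < 1" "i \<in> W \<longleftrightarrow> 1 \<le> x$i + frac (a$i)"
      using assms by (auto simp: wrap_source_def torus_def)
    moreover have "0 \<le> frac (a$i)" "frac (a$i) < 1" by (simp_all add: frac_lt_1)
    moreover have "frac (a$i + x$i) = frac (frac (a$i) + x$i)" by simp
    ultimately show ?thesis by (simp only:) (subst frac_unique_iff, auto)
  qed
  then show ?thesis by (simp add: tplus_def wrap_shift_def vec_eq_iff)
qed

lemma mem_wrap_source_iff: "x \<in> wrap_source a W \<longleftrightarrow> x + wrap_shift a W \<in> wrap_target a W"
proof -
  have "(0 \<le> x$i \<and> x$i < 1 \<and> (i \<in> W \<longleftrightarrow> 1 \<le> x$i + frac (a$i))) \<longleftrightarrow>
     (0 \<le> (x + wrap_shift a W)$i \<and> (x + wrap_shift a W)$i < 1 \<and>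
      (i \<in> W \<longleftrightarrow> (x + wrap_shift a W)$i < frac (a$i)))" for i
  proof -
    define f where "f = frac (a$i)"
    have "0 \<le> f" "f < 1" by (simp_all add: frac_lt_1 f_def)
    moreover have "(x + wrap_shift a W)$i = x$i + f - (if i \<in> W then 1 else 0)"
      by (simp add: wrap_shift_def f_def)
    ultimately show ?thesis unfolding f_def[symmetric] by (cases "i \<in> W") auto
  qed
  then show ?thesis
    unfolding wrap_source_def wrap_target_def torus_def mem_Collect_eq by blast
qed

lemma emeasure_wrap_source_translate:
  assumes "S \<in> sets borel"
  shows "emeasure lborel (wrap_source a W \<inter> (\<lambda>x. x + wrap_shift a W) -` S) =
    emeasure lborel (wrap_target a W \<inter> S)"
proof -
  have "wrap_source a W \<inter> (\<lambda>x. x + wrap_shift a W) -` S =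
      (\<lambda>x. x + wrap_shift a W) -` (wrap_target a W \<inter> S)"
    using mem_wrap_source_iff by blast
  moreover have "wrap_target a W \<inter> S \<in> sets borel" using assms by measurable
  ultimately show ?thesis by (metis emeasure_lborel_translate)
qed

lemma wrap_source_eq: "x \<in> wrap_source a W \<longleftrightarrow> x \<in> torus \<and> W = {i. 1 \<le> x$i + frac (a$i)}"
  and wrap_target_eq: "x \<in> wrap_target a W \<longleftrightarrow> x \<in> torus \<and> W = {i. x$i < frac (a$i)}"
  by (auto simp: wrap_source_def wrap_target_def)

lemma emeasure_torus_wrap_split:
  assumes X: "X \<in> sets borel"
  shows "emeasure lborel (torus \<inter> X) = (\<Sum>W\<in>UNIV. emeasure lborel (wrap_source a W \<inter> X))"
    and "emeasure lborel (torus \<inter> X) = (\<Sum>W\<in>UNIV. emeasure lborel (wrap_target a W \<inter> X))"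
proof -
  have "torus \<inter> X = (\<Union>W. wrap_source a W \<inter> X)" "torus \<inter> X = (\<Union>W. wrap_target a W \<inter> X)"
    by (auto simp: wrap_source_eq wrap_target_eq)
  moreover have "disjoint_family (\<lambda>W. wrap_source a W \<inter> X)"
    "disjoint_family (\<lambda>W. wrap_target a W \<inter> X)"
    by (auto simp: disjoint_family_on_def wrap_source_eq wrap_target_eq)
  ultimately show "emeasure lborel (torus \<inter> X) = (\<Sum>W\<in>UNIV. emeasure lborel (wrap_source a W \<inter> X))"
    and "emeasure lborel (torus \<inter> X) = (\<Sum>W\<in>UNIV. emeasure lborel (wrap_target a W \<inter> X))"
    using X by (simp_all add: sum_emeasure image_subset_iff)
qed

section \<open>Uniqueness of invariant probability measures\<close>

lemma nn_integral_indicator_comp: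
  assumes f: "f \<in> M \<rightarrow>\<^sub>M N" and A: "A \<in> sets N"
  shows "(\<integral>\<^sup>+x. indicator A (f x) \<partial>M) = emeasure M (f -` A \<inter> space M)"
proof -
  have "(\<integral>\<^sup>+x. indicator A (f x) \<partial>M) = (\<integral>\<^sup>+x. indicator (f -` A \<inter> space M) x \<partial>M)"
    by (intro nn_integral_cong) (auto split: split_indicator)
  then show ?thesis using measurable_sets[OF f A] by simp
qed

text \<open>Both \<open>M A\<close> and \<open>N A\<close> equal \<open>\<integral>\<integral> 1\<^sub>A(op x y) dM(x) dN(y)\<close>: integrate in either order
  (Fubini), using invariance on the inner integral and commutativity of \<open>op\<close>.\<close>

lemma invariant_prob_measure_unique:
  fixes M N :: "'a::topological_space measure" and op :: "'a \<Rightarrow> 'a \<Rightarrow> 'a"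
  assumes op_comm: "\<And>x y. op x y = op y x"
    and op_measurable: "(\<lambda>(x, y). op x y) \<in> borel_measurable (borel \<Otimes>\<^sub>M borel)"
    and K: "K \<in> sets borel"
    and M: "sets M = sets borel" "prob_space M" "emeasure M K = 1" "\<And>a. a \<in> K \<Longrightarrow> distr M borel (op a) = M"
    and N: "sets N = sets borel" "prob_space N" "emeasure N K = 1" "\<And>a. a \<in> K \<Longrightarrow> distr N borel (op a) = N"
  shows "M = N"
proof (rule measure_eqI)
  interpret M: prob_space M by fact
  interpret N: prob_space N by fact
  interpret MN: pair_sigma_finite M N by unfold_locales
  have inner: "(\<integral>\<^sup>+x. indicator A (op y x) \<partial>P) = emeasure P A"
    if P: "sets P = sets borel" "\<And>a. a \<in> K \<Longrightarrow> distr P borel (op a) = P"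
      and y: "y \<in> K" and A: "A \<in> sets borel" for P y A
  proof -
    have "op y \<in> P \<rightarrow>\<^sub>M borel"
      using measurable_Pair2[OF op_measurable, of y] by (simp add: measurable_cong_sets[OF P(1) refl])
    then show ?thesis
      using nn_integral_indicator_comp[of "op y" P borel A] emeasure_distr[of "op y" P borel A] P y A
      by simp
  qed
  have ae_K: "AE x in P. x \<in> K" if "prob_space P" "sets P = sets borel" "emeasure P K = 1" for P
    using that K prob_space.AE_prob_1[of P K] by (simp add: measure_def)
  show "sets M = sets N" using M(1) N(1) by simp
  fix A assume "A \<in> sets M"
  then have A[measurable]: "A \<in> sets borel" using M(1) by simp
  have "(\<lambda>(x, y). indicator A (op x y) :: ennreal) \<in> borel_measurable (borel \<Otimes>\<^sub>M borel)"
    using op_measurable by measurable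
  then have meas: "(\<lambda>(x, y). indicator A (op y x) :: ennreal) \<in> borel_measurable (M \<Otimes>\<^sub>M N)"
    by (simp add: op_comm measurable_cong_sets[OF sets_pair_measure_cong[OF M(1) N(1)] refl])
  have "emeasure M A = (\<integral>\<^sup>+y. emeasure M A \<partial>N)"
    by (simp add: N.emeasure_space_1)
  also have "\<dots> = (\<integral>\<^sup>+y. (\<integral>\<^sup>+x. indicator A (op y x) \<partial>M) \<partial>N)"
    using ae_K[OF N(2,1,3)] inner[OF M(1,4) _ A] by (intro nn_integral_cong_AE) auto
  also have "\<dots> = (\<integral>\<^sup>+x. (\<integral>\<^sup>+y. indicator A (op x y) \<partial>N) \<partial>M)"
    using MN.Fubini'[OF meas] by (simp add: op_comm)
  also have "\<dots> = (\<integral>\<^sup>+x. emeasure N A \<partial>M)"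
    using ae_K[OF M(2,1,3)] inner[OF N(1,4) _ A] by (intro nn_integral_cong_AE) auto
  also have "\<dots> = emeasure N A"
    by (simp add: M.emeasure_space_1)
  finally show "emeasure M A = emeasure N A" .
qed

section \<open>Pivot columns of a full-rank matrix\<close>

lemma full_rank_independent_columns:
  fixes A :: "real^'m^'r"
  assumes "rank A = CARD('r)"
  obtains I where "inj_on (\<lambda>i. column i A) I" "independent ((\<lambda>i. column i A) ` I)"
    "span ((\<lambda>i. column i A) ` I) = UNIV"
proof -
  have "\<exists>B. A ** B = mat 1"
    using assms by (simp add: full_rank_surjective matrix_right_invertible_surjective)
  then have "span (columns A) = UNIV"
    by (simp add: matrix_right_invertible_span_columns span_vec_eq)
  moreover obtain B where B: "B \<subseteq> columns A" "independent B" "columns A \<subseteq> span B"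
    by (rule maximal_independent_subset)
  ultimately have span: "span B = UNIV"
    using span_mono[OF B(3)] by (auto simp: span_span)
  have "\<forall>b\<in>B. \<exists>i. column i A = b" using B(1) by (auto simp: columns_def)
  then obtain idx where idx: "\<And>b. b \<in> B \<Longrightarrow> column (idx b) A = b" by metis
  have "(\<lambda>i. column i A) ` idx ` B = B"
    using idx by (force simp: image_image)
  moreover have "inj_on (\<lambda>i. column i A) (idx ` B)"
    using idx by (auto simp: inj_on_def)
  ultimately show ?thesis using that B(2) span by metis
qed

lemma matrix_vector_mult_supported:
  fixes A :: "real^'m^'r"
  assumes "\<And>i. i \<notin> I \<Longrightarrow> u$i = 0"
  shows "A *v u = (\<Sum>i\<in>I. u$i *\<^sub>R column i A)"
  unfolding matrix_mult_sum scalar_mult_eq_scaleR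
  by (rule sum.mono_neutral_cong_right) (auto simp: assms)

lemma solvable_if_columns_span:
  fixes A :: "real^'m^'r"
  assumes inj: "inj_on (\<lambda>i. column i A) I" and span: "span ((\<lambda>i. column i A) ` I) = UNIV"
  obtains u where "\<And>i. i \<notin> I \<Longrightarrow> u$i = 0" "A *v u = y"
proof -
  have "y \<in> span ((\<lambda>i. column i A) ` I)" using span by simp
  then obtain c where "y = (\<Sum>b\<in>(\<lambda>i. column i A) ` I. c b *\<^sub>R b)"
    unfolding span_finite[OF finite_imageI[OF finite]] by blast
  also have "\<dots> = (\<Sum>i\<in>I. c (column i A) *\<^sub>R column i A)"
    by (simp add: sum.reindex[OF inj])
  also have "\<dots> = A *v (\<chi> i. if i \<in> I then c (column i A) else 0)"
    by (subst matrix_vector_mult_supported[where I=I]) auto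
  finally show ?thesis by (intro that[of "\<chi> i. if i \<in> I then c (column i A) else 0"]) simp_all
qed

lemma injective_if_columns_independent:
  fixes A :: "real^'m^'r"
  assumes inj: "inj_on (\<lambda>i. column i A) I" and indep: "independent ((\<lambda>i. column i A) ` I)"
    and v0: "\<And>i. i \<notin> I \<Longrightarrow> v$i = 0" and Av: "A *v v = 0"
  shows "v = 0"
proof -
  let ?B = "(\<lambda>i. column i A) ` I"
  let ?c = "\<lambda>b. v $ inv_into I (\<lambda>i. column i A) b"
  have "(\<Sum>b\<in>?B. ?c b *\<^sub>R b) = (\<Sum>i\<in>I. v$i *\<^sub>R column i A)"
    by (simp add: sum.reindex[OF inj] inv_into_f_f[OF inj])
  also have "\<dots> = 0" using Av matrix_vector_mult_supported[of I v A] v0 by simp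
  finally have sum0: "(\<Sum>b\<in>?B. ?c b *\<^sub>R b) = 0" .
  have coeffs_zero: "\<forall>c. (\<Sum>b\<in>?B. c b *\<^sub>R b) = 0 \<longrightarrow> (\<forall>b\<in>?B. c b = 0)"
    using indep unfolding independent_explicit by (rule conjunct2)
  have "?c b = 0" if "b \<in> ?B" for b
    using coeffs_zero[rule_format, OF sum0 that] .
  then have "v$i = 0" if "i \<in> I" for i
    using that by (metis imageI inv_into_f_f[OF inj])
  then show ?thesis using v0 by (auto simp: vec_eq_iff)
qed

lemma full_rank_pivot_right_inverse:
  fixes A :: "real^'m^'r"
  assumes "rank A = CARD('r)"
  obtains I :: "'m set" and R :: "real^'r^'m" where
    "card I = CARD('r)" "A ** R = mat 1" "\<And>i. i \<notin> I \<Longrightarrow> R$i = 0"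
    "\<And>u. (\<And>i. i \<notin> I \<Longrightarrow> u$i = 0) \<Longrightarrow> A *v u = 0 \<Longrightarrow> u = 0"
proof -
  obtain I where inj: "inj_on (\<lambda>i. column i A) I"
    and indep: "independent ((\<lambda>i. column i A) ` I)" and span: "span ((\<lambda>i. column i A) ` I) = UNIV"
    using full_rank_independent_columns[OF assms] by blast
  have card: "card I = CARD('r)"
    using basis_card_eq_dim[of "(\<lambda>i. column i A) ` I" UNIV] indep span card_image[OF inj] by simp
  have "\<forall>y. \<exists>u. (\<forall>i. i \<notin> I \<longrightarrow> u$i = 0) \<and> A *v u = y"
    by (metis solvable_if_columns_span[OF inj span])
  then obtain u where u0: "\<And>y i. i \<notin> I \<Longrightarrow> u y $ i = 0" and Au: "\<And>y. A *v u y = y"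
    by metis
  define R :: "real^'r^'m" where "R = (\<chi> i k. u (axis k 1) $ i)"
  have "(A ** R)$r$k = (A *v u (axis k 1))$r" for r k
    by (simp add: matrix_matrix_mult_def matrix_vector_mult_def R_def)
  then have "A ** R = mat 1" by (simp add: vec_eq_iff Au mat_def axis_def)
  moreover have "R$i = 0" if "i \<notin> I" for i
    using u0[OF that] by (simp add: R_def vec_eq_iff)
  ultimately show ?thesis
    using that card injective_if_columns_independent[OF inj indep] by blast
qed

section \<open>A model of the Haar measure on the kernel\<close>

locale ker_pivots =
  fixes L :: "int^'m^'r" and I :: "'m set" and R :: "real^'r^'m"
  assumes card_pivots: "card I = CARD('r)"
    and right_inverse: "realmat L ** R = mat 1"
    and R_rows: "\<And>i. i \<notin> I \<Longrightarrow> R$i = 0"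
    and pivot_injective: "\<And>u. (\<And>i. i \<notin> I \<Longrightarrow> u$i = 0) \<Longrightarrow> realmat L *v u = 0 \<Longrightarrow> u = 0"
begin

abbreviation "A \<equiv> realmat L"

definition free_part :: "real^'m \<Rightarrow> real^'m" where
  "free_part x = (\<chi> i. if i \<in> I then 0 else x$i)"

definition pivot_supported :: "real^'m \<Rightarrow> bool" where
  "pivot_supported u \<longleftrightarrow> (\<forall>i. i \<notin> I \<longrightarrow> u$i = 0)"

definition offsets :: "(real^'m) set" where
  "offsets = {u \<in> torus. pivot_supported u \<and> int_vec (A *v u)}"

text \<open>\<open>chart u x\<close> keeps the free coordinates of \<open>x\<close> and solves for the pivot coordinates through
  \<open>R\<close>, up to the offset \<open>u\<close>; every point of \<open>torus_ker L\<close> arises in this way.\<close>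

definition chart :: "real^'m \<Rightarrow> real^'m \<Rightarrow> real^'m" where
  "chart u x = frac_vec (free_part x + u - R *v (A *v free_part x))"

definition haar_model :: "(real^'m) measure" where
  "haar_model = distr (uniform_count_measure offsets \<Otimes>\<^sub>M uniform_measure lborel torus) borel
     (\<lambda>(u, x). chart u x)"

lemma realmat_mult_R: "A *v (R *v y) = y"
  by (simp add: matrix_vector_mul_assoc right_inverse)

lemma pivot_supported_R: "pivot_supported (R *v y)"
  by (simp add: pivot_supported_def matrix_vector_mult_def R_rows)

lemma R_realmat_mult: "pivot_supported u \<Longrightarrow> R *v (A *v u) = u"
  using pivot_injective[of "R *v (A *v u) - u"] pivot_supported_R[of "A *v u"]
  by (simp add: pivot_supported_def matrix_vector_mult_diff_distrib realmat_mult_R)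

lemma pivot_supported_add: "pivot_supported x \<Longrightarrow> pivot_supported y \<Longrightarrow> pivot_supported (x + y)"
  and pivot_supported_diff: "pivot_supported x \<Longrightarrow> pivot_supported y \<Longrightarrow> pivot_supported (x - y)"
  and pivot_supported_scale: "pivot_supported x \<Longrightarrow> pivot_supported (c *\<^sub>R x)"
  and pivot_supported_frac_vec: "pivot_supported x \<Longrightarrow> pivot_supported (frac_vec x)"
  and pivot_supported_diff_free_part: "pivot_supported (x - free_part x)"
  by (simp_all add: pivot_supported_def frac_vec_def free_part_def)

lemma free_part_add: "free_part (x + y) = free_part x + free_part y"
  and free_part_diff: "free_part (x - y) = free_part x - free_part y"
  and int_vec_free_part: "int_vec x \<Longrightarrow> int_vec (free_part x)"
  by (simp_all add: free_part_def vec_eq_iff int_vec_def)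

lemma free_part_borel_measurable[measurable]: "free_part \<in> borel_measurable borel"
  unfolding free_part_def by measurable

lemma chart_borel_measurable[measurable]: "chart u \<in> borel_measurable borel"
  unfolding chart_def[abs_def] by measurable

lemma chart_in_torus_ker: "int_vec (A *v u) \<Longrightarrow> chart u x \<in> torus_ker L"
proof -
  assume u: "int_vec (A *v u)"
  have "A *v (free_part x + u - R *v (A *v free_part x)) = A *v u"
    by (simp add: matrix_vector_right_distrib matrix_vector_mult_diff_distrib realmat_mult_R)
  then have "int_vec (A *v (free_part x + u - R *v (A *v free_part x)))"
    using u by simp
  then show ?thesis
    by (simp add: mem_torus_ker_iff chart_def frac_vec_in_torus int_vec_realmat_mult_frac_vec)
qed

lemma finite_pivot_supported_int_bounded:
  "finite {u. pivot_supported u \<and> int_vec (A *v u) \<and> (\<forall>i. \<bar>u$i\<bar> \<le> c)}"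
proof -
  let ?K = "{k. \<forall>j. k$j \<in> \<int> \<and> \<bar>k$j\<bar> \<le> abs_entry_sum A * c}"
  have "{u. pivot_supported u \<and> int_vec (A *v u) \<and> (\<forall>i. \<bar>u$i\<bar> \<le> c)} \<subseteq> (\<lambda>k. R *v k) ` ?K"
  proof
    fix u assume u: "u \<in> {u. pivot_supported u \<and> int_vec (A *v u) \<and> (\<forall>i. \<bar>u$i\<bar> \<le> c)}"
    then have "A *v u \<in> ?K"
      by (auto simp: int_vec_def intro: abs_matrix_vector_mult_le)
    moreover have "u = R *v (A *v u)" using R_realmat_mult u by simp
    ultimately show "u \<in> (\<lambda>k. R *v k) ` ?K" by blast
  qed
  then show ?thesis using finite_bounded_int_vecs by (rule finite_subset[OF _ finite_imageI])
qed

lemma finite_offsets: "finite offsets"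
proof -
  have "\<bar>u$i\<bar> \<le> 1" if "u \<in> offsets" for u i
  proof -
    have "0 \<le> u$i" "u$i < 1" using that by (auto simp: offsets_def torus_def)
    then show ?thesis by simp
  qed
  then show ?thesis
    by (intro finite_subset[OF _ finite_pivot_supported_int_bounded[of 1]]) (auto simp: offsets_def)
qed

lemma zero_in_offsets: "0 \<in> offsets"
  by (simp add: offsets_def torus_def pivot_supported_def int_vec_def)

definition indicator_vec :: "'m set \<Rightarrow> real^'m" where
  "indicator_vec W = (\<chi> i. if i \<in> W then 1 else 0)"

definition offset_shift :: "real^'m \<Rightarrow> 'm set \<Rightarrow> real^'m" where
  "offset_shift a W = (a - free_part a) + R *v (A *v free_part a) - R *v (A *v free_part (indicator_vec W))"

definition offset_step :: "real^'m \<Rightarrow> 'm set \<Rightarrow> real^'m \<Rightarrow> real^'m" where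
  "offset_step a W u = frac_vec (u + offset_shift a W)"

lemma chart_wrap_shift:
  assumes a: "a \<in> torus"
  shows "chart (offset_step a W u) (x + wrap_shift a W) = tplus a (chart u x)"
proof -
  let ?y = "u + offset_shift a W"
  let ?n = "?y - frac_vec ?y"
  have wrap: "wrap_shift a W = a - indicator_vec W"
    using a by (simp add: wrap_shift_def torus_def indicator_vec_def vec_eq_iff)
  have "chart (offset_step a W u) (x + wrap_shift a W) =
      frac_vec (free_part x + free_part a - free_part (indicator_vec W) + (?y - ?n)
        - R *v (A *v (free_part x + free_part a - free_part (indicator_vec W))))"
    by (simp add: chart_def offset_step_def wrap free_part_add free_part_diff add_diff_eq)
  also have "\<dots> = frac_vec ((a + (free_part x + u - R *v (A *v free_part x))) + (- free_part (indicator_vec W) - ?n))"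
  proof -
    have d: "R *v (A *v (free_part x + free_part a - free_part (indicator_vec W))) =
        R *v (A *v free_part x) + R *v (A *v free_part a) - R *v (A *v free_part (indicator_vec W))"
      by (simp add: matrix_vector_right_distrib matrix_vector_mult_diff_distrib)
    have "\<And>(p::real^'m) q r u a s t n X. p + q - r + ((u + (a - q + s - t)) - n) - (X + s - t)
        = (a + (p + u - X)) + (- r - n)"
      by (simp add: algebra_simps)
    then show ?thesis
      unfolding d offset_shift_def by (rule arg_cong[where f=frac_vec])
  qed
  also have "\<dots> = frac_vec (a + (free_part x + u - R *v (A *v free_part x)))"
  proof (rule frac_vec_add_int_vec)
    have "int_vec (indicator_vec W)" by (simp add: int_vec_def indicator_vec_def)
    then show "int_vec (- free_part (indicator_vec W) - ?n)"
      using int_vec_diff_frac_vec[of ?y] int_vec_free_part by (simp add: int_vec_def)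
  qed
  also have "\<dots> = tplus a (chart u x)"
    by (simp add: tplus_eq_frac_vec chart_def frac_vec_add_frac_vec)
  finally show ?thesis .
qed

lemma offset_step_in_offsets:
  assumes a: "a \<in> torus_ker L" and u: "u \<in> offsets"
  shows "offset_step a W u \<in> offsets"
proof -
  let ?y = "u + offset_shift a W"
  have "pivot_supported ?y"
    using u unfolding offsets_def offset_shift_def
    by (intro pivot_supported_add pivot_supported_diff pivot_supported_diff_free_part pivot_supported_R) auto
  moreover have "A *v ?y = A *v u + A *v a - A *v free_part (indicator_vec W)"
    by (simp add: offset_shift_def matrix_vector_right_distrib matrix_vector_mult_diff_distrib realmat_mult_R)
  moreover have "int_vec (A *v free_part (indicator_vec W))"
    by (intro int_vec_realmat_mult int_vec_free_part) (simp add: int_vec_def indicator_vec_def)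
  ultimately show ?thesis
    using u a int_vec_realmat_mult_frac_vec[of L ?y] frac_vec_in_torus
    by (auto simp: offsets_def offset_step_def mem_torus_ker_iff pivot_supported_frac_vec
        intro!: int_vec_add int_vec_diff)
qed

lemma inj_on_offset_step: "inj_on (offset_step a W) torus"
proof
  fix u v assume u: "u \<in> torus" and v: "v \<in> torus" and eq: "offset_step a W u = offset_step a W v"
  have "u$i = v$i" for i
  proof -
    have "frac (u$i + offset_shift a W $i) = frac (v$i + offset_shift a W $i)"
      using eq by (simp add: offset_step_def frac_vec_def vec_eq_iff)
    then obtain n :: int where n: "u$i + offset_shift a W $i = v$i + offset_shift a W $i + n"
      by (rule frac_eqE)
    moreover have "0 \<le> u$i" "u$i < 1" "0 \<le> v$i" "v$i < 1" using u v by (auto simp: torus_def)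
    ultimately have "n = 0" by linarith
    with n show ?thesis by simp
  qed
  then show "u = v" by (simp add: vec_eq_iff)
qed

lemma bij_betw_offset_step:
  assumes "a \<in> torus_ker L"
  shows "bij_betw (offset_step a W) offsets offsets"
proof -
  have inj: "inj_on (offset_step a W) offsets"
    using inj_on_offset_step by (rule inj_on_subset) (auto simp: offsets_def)
  moreover have "offset_step a W ` offsets = offsets"
    using offset_step_in_offsets[OF assms] by (intro endo_inj_surj[OF finite_offsets _ inj]) blast
  ultimately show ?thesis by (simp add: bij_betw_def)
qed

lemma chart_pair_measurable:
  "(\<lambda>(u, x). chart u x) \<in> uniform_count_measure offsets \<Otimes>\<^sub>M uniform_measure lborel torus \<rightarrow>\<^sub>M borel"
proof -
  have sets_eq: "sets (uniform_count_measure offsets \<Otimes>\<^sub>M uniform_measure lborel torus) =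
      sets (count_space offsets \<Otimes>\<^sub>M borel)"
    by (rule sets_pair_measure_cong) (simp_all add: sets_uniform_count_measure_count_space)
  have "(\<lambda>(u, x). chart u x) \<in> count_space offsets \<Otimes>\<^sub>M borel \<rightarrow>\<^sub>M borel"
    by (rule measurable_pair_measure_countable1) (auto simp: countable_finite[OF finite_offsets])
  then show ?thesis by (simp add: measurable_cong_sets[OF sets_eq refl])
qed

lemma emeasure_haar_model:
  assumes S: "S \<in> sets borel"
  shows "emeasure haar_model S =
    ennreal (1 / real (card offsets)) * (\<Sum>u\<in>offsets. emeasure lborel (torus \<inter> chart u -` S))"
proof -
  let ?\<Omega> = "uniform_count_measure offsets \<Otimes>\<^sub>M uniform_measure lborel torus"
  interpret T: prob_space "uniform_measure lborel (torus :: (real^'m) set)"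
    by (rule prob_space_uniform_torus)
  have slice: "Pair u -` ((\<lambda>(u, x). chart u x) -` S \<inter> space ?\<Omega>) = chart u -` S" if "u \<in> offsets" for u
    using that by (auto simp: space_pair_measure space_uniform_count_measure)
  have "emeasure haar_model S = emeasure ?\<Omega> ((\<lambda>(u, x). chart u x) -` S \<inter> space ?\<Omega>)"
    unfolding haar_model_def using S chart_pair_measurable by (simp add: emeasure_distr)
  also have "\<dots> = (\<integral>\<^sup>+u. emeasure (uniform_measure lborel torus)
      (Pair u -` ((\<lambda>(u, x). chart u x) -` S \<inter> space ?\<Omega>)) \<partial>uniform_count_measure offsets)"
    using measurable_sets[OF chart_pair_measurable S] by (rule T.emeasure_pair_measure_alt)
  also have "\<dots> = (\<integral>\<^sup>+u. emeasure (uniform_measure lborel torus) (chart u -` S) \<partial>uniform_count_measure offsets)"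
    by (intro nn_integral_cong, subst slice) (auto simp: space_uniform_count_measure)
  also have "\<dots> = (\<Sum>u\<in>offsets. ennreal (1 / real (card offsets)) *
      emeasure (uniform_measure lborel torus) (chart u -` S))"
    unfolding uniform_count_measure_def by (rule nn_integral_point_measure_finite[OF finite_offsets])
  also have "\<dots> = (\<Sum>u\<in>offsets. ennreal (1 / real (card offsets)) * emeasure lborel (torus \<inter> chart u -` S))"
    using S by (simp add: emeasure_lborel_torus divide_ennreal_def measurable_sets_borel[OF chart_borel_measurable])
  finally show ?thesis by (simp add: sum_distrib_left)
qed

lemma sets_haar_model[simp]: "sets haar_model = sets borel"
  and space_haar_model[simp]: "space haar_model = UNIV"
  by (simp_all add: haar_model_def)

lemma prob_space_haar_model: "prob_space haar_model"
proof -
  have "prob_space (uniform_count_measure offsets \<Otimes>\<^sub>M uniform_measure lborel torus)"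
    using finite_offsets zero_in_offsets
    by (intro prob_space_pair prob_space_uniform_count_measure prob_space_uniform_torus) auto
  then show ?thesis
    unfolding haar_model_def
    by (rule prob_space.prob_space_distr) (rule chart_pair_measurable)
qed

lemma emeasure_haar_model_torus_ker: "emeasure haar_model (torus_ker L) = 1"
proof -
  have "torus \<inter> chart u -` torus_ker L = torus" if "u \<in> offsets" for u
    using that chart_in_torus_ker by (auto simp: offsets_def)
  then have "emeasure haar_model (torus_ker L) = ennreal (1 / real (card offsets)) * of_nat (card offsets)"
    by (simp add: emeasure_haar_model emeasure_lborel_torus)
  also have "\<dots> = 1"
  proof -
    have "card offsets > 0" using finite_offsets zero_in_offsets card_gt_0_iff by blast
    then show ?thesis by (simp add: ennreal_of_nat_eq_real_of_nat ennreal_mult[symmetric])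
  qed
  finally show ?thesis .
qed

lemma sum_emeasure_chart_tplus:
  assumes a: "a \<in> torus_ker L" and S: "S \<in> sets borel"
  shows "(\<Sum>u\<in>offsets. emeasure lborel (torus \<inter> chart u -` (tplus a -` S))) =
    (\<Sum>u\<in>offsets. emeasure lborel (torus \<inter> chart u -` S))"
proof -
  have at: "a \<in> torus" using a by (simp add: torus_ker_def)
  have chart_sets: "chart u -` X \<in> sets borel" if "X \<in> sets borel" for u X
    using measurable_sets_borel[OF chart_borel_measurable that] .
  have tS: "tplus a -` S \<in> sets borel"
    using measurable_sets_borel[OF tplus_borel_measurable S] .
  have "(\<Sum>u\<in>offsets. emeasure lborel (torus \<inter> chart u -` (tplus a -` S))) =
      (\<Sum>u\<in>offsets. \<Sum>W\<in>UNIV. emeasure lborel (wrap_source a W \<inter> chart u -` (tplus a -` S)))"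
    by (intro sum.cong refl emeasure_torus_wrap_split(1) chart_sets tS)
  also have "\<dots> = (\<Sum>u\<in>offsets. \<Sum>W\<in>UNIV. emeasure lborel
      (wrap_source a W \<inter> (\<lambda>x. x + wrap_shift a W) -` (chart (offset_step a W u) -` S)))"
    using chart_wrap_shift[OF at] tplus_on_wrap_source
    by (intro sum.cong refl arg_cong[where f="emeasure lborel"]) auto
  also have "\<dots> = (\<Sum>u\<in>offsets. \<Sum>W\<in>UNIV. emeasure lborel (wrap_target a W \<inter> chart (offset_step a W u) -` S))"
    by (intro sum.cong refl emeasure_wrap_source_translate chart_sets S)
  also have "\<dots> = (\<Sum>W\<in>UNIV. \<Sum>u\<in>offsets. emeasure lborel (wrap_target a W \<inter> chart (offset_step a W u) -` S))"
    by (rule sum.swap)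
  also have "\<dots> = (\<Sum>W\<in>UNIV. \<Sum>u\<in>offsets. emeasure lborel (wrap_target a W \<inter> chart u -` S))"
  proof (rule sum.cong[OF refl])
    fix W
    show "(\<Sum>u\<in>offsets. emeasure lborel (wrap_target a W \<inter> chart (offset_step a W u) -` S)) =
        (\<Sum>u\<in>offsets. emeasure lborel (wrap_target a W \<inter> chart u -` S))"
      using sum.reindex_bij_betw[OF bij_betw_offset_step[OF a, of W],
          of "\<lambda>u. emeasure lborel (wrap_target a W \<inter> chart u -` S)"] by simp
  qed
  also have "\<dots> = (\<Sum>u\<in>offsets. emeasure lborel (torus \<inter> chart u -` S))"
    by (subst sum.swap) (intro sum.cong refl emeasure_torus_wrap_split(2)[symmetric] chart_sets S)
  finally show ?thesis .
qed

lemma haar_model_invariant: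
  assumes a: "a \<in> torus_ker L"
  shows "distr haar_model borel (tplus a) = haar_model"
proof (rule measure_eqI)
  fix S assume "S \<in> sets (distr haar_model borel (tplus a))"
  then have S: "S \<in> sets borel" by simp
  have "emeasure (distr haar_model borel (tplus a)) S = emeasure haar_model (tplus a -` S)"
    using S by (simp add: emeasure_distr measurable_cong_sets[OF sets_haar_model refl])
  also have "\<dots> = emeasure haar_model S"
    using sum_emeasure_chart_tplus[OF a S] S
    by (simp add: emeasure_haar_model measurable_sets_borel[OF tplus_borel_measurable S])
  finally show "emeasure (distr haar_model borel (tplus a)) S = emeasure haar_model S" .
qed simp

lemma haar_ker_eq_haar_model: "haar_ker L = haar_model"
  unfolding haar_ker_def
proof (rule the_equality)
  let ?P = "\<lambda>M. sets M = sets borel \<and> prob_space M \<and> emeasure M (torus_ker L) = 1 \<and>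
    (\<forall>a\<in>torus_ker L. distr M borel (tplus a) = M)"
  show "?P haar_model"
    using prob_space_haar_model emeasure_haar_model_torus_ker haar_model_invariant by simp
  show "M = haar_model" if "?P M" for M
    by (rule invariant_prob_measure_unique[where op=tplus and K="torus_ker L",
          OF tplus_comm tplus_pair_borel_measurable torus_ker_sets])
       (use that prob_space_haar_model emeasure_haar_model_torus_ker haar_model_invariant in auto)
qed

end

section \<open>The measure of a cell\<close>

lemma frac_mem_cell_iff:
  fixes p y k :: real
  assumes p: "0 < p" and k: "0 \<le> k" "k + 1 \<le> p"
  shows "(k / p \<le> frac y \<and> frac y < k / p + 1 / p) \<longleftrightarrow>
    (\<exists>n::int. 0 \<le> p * y - p * n - k \<and> p * y - p * n - k < 1)"
proof
  assume "k / p \<le> frac y \<and> frac y < k / p + 1 / p"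
  then have "0 \<le> p * frac y - k" "p * frac y - k < 1" using p by (auto simp: field_simps)
  moreover have "p * y - p * of_int \<lfloor>y\<rfloor> - k = p * frac y - k" by (simp add: frac_def algebra_simps)
  ultimately show "\<exists>n::int. 0 \<le> p * y - p * n - k \<and> p * y - p * n - k < 1"
    by (intro exI[of _ "\<lfloor>y\<rfloor>"]) simp
next
  assume "\<exists>n::int. 0 \<le> p * y - p * n - k \<and> p * y - p * n - k < 1"
  then obtain n :: int where "0 \<le> p * y - p * n - k" "p * y - p * n - k < 1" by blast
  then have n: "k / p \<le> y - n" "y - n < k / p + 1 / p"
    using p by (auto simp: field_simps)
  moreover have "0 \<le> k / p" "k / p + 1 / p \<le> 1" using k p by (simp_all add: field_simps)
  ultimately have "frac y = y - n" by (subst frac_unique_iff) auto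
  then show "k / p \<le> frac y \<and> frac y < k / p + 1 / p" using n by simp
qed

lemma scaled_mem_cell_iff:
  fixes p t k :: real
  assumes p: "0 < p" and k: "0 \<le> k" "k + 1 \<le> p"
  shows "(0 \<le> (k + t) / p \<and> (k + t) / p < 1 \<and> k / p \<le> frac ((k + t) / p) \<and> frac ((k + t) / p) < k / p + 1 / p)
     \<longleftrightarrow> (0 \<le> t \<and> t < 1)"
proof -
  have "0 \<le> (k + t) / p \<and> (k + t) / p < 1 \<longleftrightarrow> 0 \<le> k + t \<and> k + t < p"
    using p by (simp add: field_simps)
  moreover have "k / p \<le> (k + t) / p \<and> (k + t) / p < k / p + 1 / p \<longleftrightarrow> 0 \<le> t \<and> t < 1"
    using p by (simp add: field_simps)
  ultimately show ?thesis using k by (auto simp: frac_eq)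
qed

definition real_vec :: "nat^'n \<Rightarrow> real^'n" where
  "real_vec j = (\<chi> i. real (j$i))"

lemma cell_sets[measurable]: "cell p j \<in> sets borel"
  unfolding cell_def by measurable

lemma lam_pos_if_mem_J_set:
  assumes "0 < p" "div_vec j p \<in> J_set L p"
  shows "lam L p j > 0"
proof -
  obtain j' where j': "div_vec j p = div_vec j' p" "mu_L L (cell p j' \<inter> torus_ker L) > 0"
    using assms(2) by (auto simp: J_set_def)
  have "real (j$i) / real p = real (j'$i) / real p" for i
    using arg_cong[OF j'(1), of "\<lambda>x. x$i"] by (simp add: div_vec_def)
  then have "j' = j" using assms(1) by (simp add: vec_eq_iff)
  then show ?thesis using j'(2) assms(1) by (simp add: lam_def)
qed

context ker_pivots
begin

text \<open>\<open>cell_param p j\<close> keeps the pivot coordinates and maps the free coordinates of the unit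
  cube onto those of the cell \<open>j/p + [0,1/p)^m\<close>; its Jacobian \<open>p^(r-m)\<close> cancels the factor
  \<open>p^(m-r)\<close> in \<open>lam\<close>. In these coordinates the preimage of the cell under a chart is the
  disjoint union of the slabs \<open>slab z\<close>, \<open>z \<in> cell_lattice p j u\<close>; the slabs do not depend on
  \<open>p\<close> and \<open>j\<close>, and all the \<open>z\<close> lie in the finite set \<open>lattice_points\<close>.\<close>

definition cell_param :: "nat \<Rightarrow> nat^'m \<Rightarrow> real^'m \<Rightarrow> real^'m" where
  "cell_param p j t = (\<chi> i. if i \<in> I then t$i else (real (j$i) + t$i) / real p)"

definition pivot_correction :: "real^'m \<Rightarrow> real^'m" where
  "pivot_correction t = R *v (A *v free_part t)"

definition cell_target :: "nat \<Rightarrow> nat^'m \<Rightarrow> real^'m \<Rightarrow> real^'m" where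
  "cell_target p j u =
    real p *\<^sub>R u - R *v (A *v free_part (real_vec j)) - (real_vec j - free_part (real_vec j))"

definition cell_condition :: "nat \<Rightarrow> nat^'m \<Rightarrow> real^'m \<Rightarrow> real^'m \<Rightarrow> bool" where
  "cell_condition p j u t \<longleftrightarrow> t \<in> torus \<and> (\<forall>i\<in>I. \<exists>n::int.
     0 \<le> cell_target p j u $i - real p * n - pivot_correction t $i \<and>
     cell_target p j u $i - real p * n - pivot_correction t $i < 1)"

definition slab :: "real^'m \<Rightarrow> (real^'m) set" where
  "slab z = {t \<in> torus. \<forall>i\<in>I. 0 \<le> z$i - pivot_correction t $i \<and> z$i - pivot_correction t $i < 1}"

definition cell_lattice :: "nat \<Rightarrow> nat^'m \<Rightarrow> real^'m \<Rightarrow> (real^'m) set" where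
  "cell_lattice p j u = {z. pivot_supported z \<and>
     (\<forall>i\<in>I. \<exists>n::int. z$i = cell_target p j u $i - real p * n) \<and> slab z \<noteq> {}}"

definition lattice_points :: "(real^'m) set" where
  "lattice_points = {z. pivot_supported z \<and> int_vec (A *v z) \<and> slab z \<noteq> {}}"

lemma slab_sets[measurable]: "slab z \<in> sets borel"
  unfolding slab_def pivot_correction_def by measurable

lemma chart_cell_param_pivot:
  assumes "0 < p" "i \<in> I"
  shows "chart u (cell_param p j t) $ i =
    frac ((cell_target p j u $ i + real (j$i) - pivot_correction t $ i) / real p)"
proof -
  have "free_part (cell_param p j t) = (1 / real p) *\<^sub>R (free_part (real_vec j) + free_part t)"
    using assms(1) by (simp add: free_part_def cell_param_def real_vec_def vec_eq_iff field_simps)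
  then have "R *v (A *v free_part (cell_param p j t)) =
      (1 / real p) *\<^sub>R (R *v (A *v free_part (real_vec j)) + pivot_correction t)"
    by (simp add: pivot_correction_def matrix_vector_mult_scaleR matrix_vector_right_distrib)
  then show ?thesis
    using assms by (simp add: chart_def frac_vec_def free_part_def cell_target_def real_vec_def field_simps)
qed

lemma chart_cell_param_free:
  assumes "u \<in> offsets" "i \<notin> I"
  shows "chart u (cell_param p j t) $ i = frac (cell_param p j t $ i)"
proof -
  have "u$i = 0" using assms by (simp add: offsets_def pivot_supported_def)
  moreover have "(R *v y)$i = 0" for y
    using pivot_supported_R assms(2) by (simp add: pivot_supported_def)
  ultimately show ?thesis using assms(2) by (simp add: chart_def frac_vec_def free_part_def)
qed

lemma cell_param_mem_cell_iff:
  assumes p: "0 < p" and j: "j \<in> Zp_grid p" and u: "u \<in> offsets"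
  shows "(cell_param p j t \<in> torus \<and> chart u (cell_param p j t) \<in> cell p j) \<longleftrightarrow> cell_condition p j u t"
proof -
  let ?x = "cell_param p j t"
  have jb: "0 \<le> real (j$i)" "real (j$i) + 1 \<le> real p" for i
  proof -
    have "j$i + 1 \<le> p" using j by (simp add: Zp_grid_def Suc_le_eq)
    then show "0 \<le> real (j$i)" "real (j$i) + 1 \<le> real p"
      using of_nat_le_iff[of "j$i + 1" p] by simp_all
  qed
  have "(0 \<le> ?x$i \<and> ?x$i < 1 \<and> real (j$i) / real p \<le> chart u ?x $ i \<and>
      chart u ?x $ i < real (j$i) / real p + 1 / real p) \<longleftrightarrow>
    (0 \<le> t$i \<and> t$i < 1 \<and> (i \<in> I \<longrightarrow> (\<exists>n::int.
      0 \<le> cell_target p j u $i - real p * n - pivot_correction t $i \<and>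
      cell_target p j u $i - real p * n - pivot_correction t $i < 1)))" for i
  proof (cases "i \<in> I")
    case True
    let ?y = "(cell_target p j u $ i + real (j$i) - pivot_correction t $ i) / real p"
    have pp: "0 < real p" using p by simp
    have eq: "real p * ?y - real p * n - real (j$i) =
        cell_target p j u $i - real p * n - pivot_correction t $i" for n :: int
      using p by (simp add: field_simps)
    have "(real (j$i) / real p \<le> frac ?y \<and> frac ?y < real (j$i) / real p + 1 / real p) \<longleftrightarrow>
        (\<exists>n::int. 0 \<le> cell_target p j u $i - real p * n - pivot_correction t $i \<and>
          cell_target p j u $i - real p * n - pivot_correction t $i < 1)"
      using frac_mem_cell_iff[OF pp jb(1)[of i] jb(2)[of i], of ?y] unfolding eq .
    moreover have "?x $ i = t $ i" using True by (simp add: cell_param_def)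
    ultimately show ?thesis
      using True p by (simp add: chart_cell_param_pivot)
  next
    case False
    have "?x $ i = (real (j$i) + t$i) / real p" using False by (simp add: cell_param_def)
    then show ?thesis
      using False scaled_mem_cell_iff[of "real p" "real (j$i)" "t$i"] p jb[of i] u
      by (simp add: chart_cell_param_free)
  qed
  then show ?thesis
    unfolding torus_def cell_def cell_condition_def mem_Collect_eq by auto
qed

lemma cell_condition_eq_Union_slab: "{t. cell_condition p j u t} = (\<Union>z\<in>cell_lattice p j u. slab z)"
proof
  show "{t. cell_condition p j u t} \<subseteq> (\<Union>z\<in>cell_lattice p j u. slab z)"
  proof
    fix t assume "t \<in> {t. cell_condition p j u t}"
    then have t: "t \<in> torus" and c: "\<forall>i\<in>I. \<exists>n::int.
        0 \<le> cell_target p j u $i - real p * n - pivot_correction t $i \<and>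
        cell_target p j u $i - real p * n - pivot_correction t $i < 1"
      by (auto simp: cell_condition_def)
    from bchoice[OF c] obtain n :: "'m \<Rightarrow> int" where n: "\<forall>i\<in>I.
        0 \<le> cell_target p j u $i - real p * n i - pivot_correction t $i \<and>
        cell_target p j u $i - real p * n i - pivot_correction t $i < 1"
      by blast
    define z where "z = (\<chi> i. if i \<in> I then cell_target p j u $i - real p * n i else 0)"
    have "t \<in> slab z" using t n by (simp add: slab_def z_def)
    moreover from this have "z \<in> cell_lattice p j u"
      by (auto simp: cell_lattice_def z_def pivot_supported_def)
    ultimately show "t \<in> (\<Union>z\<in>cell_lattice p j u. slab z)" by blast
  qed
  show "(\<Union>z\<in>cell_lattice p j u. slab z) \<subseteq> {t. cell_condition p j u t}"
    by (force simp: cell_lattice_def slab_def cell_condition_def)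
qed

lemma disjoint_family_on_slab:
  assumes p: "0 < p"
  shows "disjoint_family_on slab (cell_lattice p j u)"
proof (unfold disjoint_family_on_def, intro ballI impI, rule ccontr)
  fix z1 z2 assume z1: "z1 \<in> cell_lattice p j u" and z2: "z2 \<in> cell_lattice p j u"
    and ne: "z1 \<noteq> z2" and "slab z1 \<inter> slab z2 \<noteq> {}"
  then obtain t where t: "t \<in> slab z1" "t \<in> slab z2" by blast
  have "z1$i = z2$i" for i
  proof (cases "i \<in> I")
    case True
    obtain n1 :: int where n1: "z1$i = cell_target p j u $i - real p * n1"
      using z1 True by (auto simp: cell_lattice_def)
    obtain n2 :: int where n2: "z2$i = cell_target p j u $i - real p * n2"
      using z2 True by (auto simp: cell_lattice_def)
    note n = n1 n2
    have "0 \<le> z1$i - pivot_correction t $i" "z1$i - pivot_correction t $i < 1"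
      "0 \<le> z2$i - pivot_correction t $i" "z2$i - pivot_correction t $i < 1"
      using t True by (auto simp: slab_def)
    then have "\<bar>z1$i - z2$i\<bar> < 1" by (simp add: abs_less_iff)
    then have "\<bar>real p * real_of_int (n2 - n1)\<bar> < 1" using n by (simp add: algebra_simps)
    moreover have "\<bar>real_of_int (n2 - n1)\<bar> \<le> \<bar>real p * real_of_int (n2 - n1)\<bar>"
      using p by (simp add: abs_mult mult_le_cancel_right1)
    ultimately have "n2 - n1 = 0" by linarith
    then show ?thesis using n by simp
  next
    case False
    then show ?thesis using z1 z2 by (simp add: cell_lattice_def pivot_supported_def)
  qed
  with ne show False by (simp add: vec_eq_iff)
qed

lemma cell_lattice_subset_lattice_points:
  assumes u: "u \<in> offsets"
  shows "cell_lattice p j u \<subseteq> lattice_points"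
proof
  fix z assume z: "z \<in> cell_lattice p j u"
  have u': "pivot_supported u" "int_vec (A *v u)" using u by (auto simp: offsets_def)
  have target: "pivot_supported (cell_target p j u)"
    unfolding cell_target_def
    by (intro pivot_supported_diff pivot_supported_scale u' pivot_supported_R pivot_supported_diff_free_part)
  have "\<forall>i\<in>I. \<exists>n::int. z$i = cell_target p j u $i - real p * n"
    using z by (simp add: cell_lattice_def)
  from bchoice[OF this] obtain n :: "'m \<Rightarrow> int"
    where n: "\<forall>i\<in>I. z$i = cell_target p j u $i - real p * n i"
    by blast
  define nv where "nv = (\<chi> i. if i \<in> I then real_of_int (n i) else 0)"
  have "z = cell_target p j u - real p *\<^sub>R nv"
    using n z target by (auto simp: vec_eq_iff nv_def cell_lattice_def pivot_supported_def)
  moreover have "A *v cell_target p j u = real p *\<^sub>R (A *v u) - A *v real_vec j"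
    by (simp add: cell_target_def matrix_vector_mult_diff_distrib matrix_vector_mult_scaleR realmat_mult_R)
  moreover have "int_vec nv" "int_vec (real_vec j)"
    by (simp_all add: int_vec_def nv_def real_vec_def)
  ultimately have "int_vec (A *v z)"
    using u'(2) by (simp add: matrix_vector_mult_diff_distrib matrix_vector_mult_scaleR
        int_vec_diff int_vec_scale_nat int_vec_realmat_mult)
  then show "z \<in> lattice_points" using z by (simp add: lattice_points_def cell_lattice_def)
qed

lemma finite_lattice_points: "finite lattice_points"
proof -
  define c where "c = abs_entry_sum R * abs_entry_sum A + 1"
  have bound: "\<bar>pivot_correction t $ i\<bar> \<le> abs_entry_sum R * abs_entry_sum A" if "t \<in> torus" for t i
  proof -
    have "\<bar>free_part t $ l\<bar> \<le> 1" for l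
    proof -
      have "0 \<le> t$l" "t$l < 1" using that by (auto simp: torus_def)
      then show ?thesis by (simp add: free_part_def)
    qed
    then have "\<bar>(A *v free_part t) $ k\<bar> \<le> abs_entry_sum A * 1" for k
      by (rule abs_matrix_vector_mult_le)
    then show ?thesis unfolding pivot_correction_def
      using abs_matrix_vector_mult_le[of "A *v free_part t" "abs_entry_sum A * 1" R i] by simp
  qed
  have "\<bar>z$i\<bar> \<le> c" if z: "z \<in> lattice_points" for z i
  proof (cases "i \<in> I")
    case True
    obtain t where "t \<in> slab z" using z by (auto simp: lattice_points_def)
    then have "t \<in> torus" "0 \<le> z$i - pivot_correction t $i" "z$i - pivot_correction t $i < 1"
      using True by (auto simp: slab_def)
    then show ?thesis
      using bound[of t i] unfolding c_def abs_le_iff by linarith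
  next
    case False
    then show ?thesis
      using z abs_entry_sum_nonneg[of R] abs_entry_sum_nonneg[of A]
      by (simp add: lattice_points_def pivot_supported_def c_def)
  qed
  then show ?thesis
    by (intro finite_subset[OF _ finite_pivot_supported_int_bounded[of c]]) (auto simp: lattice_points_def)
qed

lemma emeasure_cell_condition:
  assumes "0 < p" "u \<in> offsets"
  shows "emeasure lborel {t. cell_condition p j u t} = (\<Sum>z\<in>cell_lattice p j u. emeasure lborel (slab z))"
  unfolding cell_condition_eq_Union_slab
  using assms finite_subset[OF cell_lattice_subset_lattice_points finite_lattice_points]
  by (intro sum_emeasure[symmetric] disjoint_family_on_slab) auto

lemma emeasure_torus_chart_cell:
  assumes p: "0 < p" and j: "j \<in> Zp_grid p" and u: "u \<in> offsets"
  shows "emeasure lborel (torus \<inter> chart u -` (cell p j \<inter> torus_ker L)) =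
    ennreal ((1 / real p) ^ (CARD('m) - CARD('r))) * emeasure lborel {t. cell_condition p j u t}"
proof -
  define d where "d i = (if i \<in> I then 1 else 1 / real p)" for i
  define s :: "real^'m" where "s = (\<chi> i. if i \<in> I then 0 else real (j$i) / real p)"
  have param: "(\<lambda>t. \<chi> i. s$i + d i * t$i) = cell_param p j"
    using p by (auto simp: s_def d_def cell_param_def vec_eq_iff add_divide_distrib)
  have "(\<Prod>i\<in>UNIV. \<bar>d i\<bar>) = (\<Prod>i\<in>- I. 1 / real p)"
    by (subst prod.mono_neutral_right[of UNIV "- I"]) (auto simp: d_def)
  also have "\<dots> = (1 / real p) ^ (CARD('m) - CARD('r))"
    using card_Diff_subset[of I UNIV] card_pivots by (simp add: Compl_eq_Diff_UNIV)
  finally have jacobian: "(\<Prod>i\<in>UNIV. \<bar>d i\<bar>) = (1 / real p) ^ (CARD('m) - CARD('r))" .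
  have "torus \<inter> chart u -` (cell p j \<inter> torus_ker L) = torus \<inter> chart u -` cell p j"
    using chart_in_torus_ker u by (auto simp: offsets_def)
  moreover have "torus \<inter> chart u -` cell p j \<in> sets borel"
    using measurable_sets_borel[OF chart_borel_measurable cell_sets] by simp
  moreover have "cell_param p j -` (torus \<inter> chart u -` cell p j) = {t. cell_condition p j u t}"
    using cell_param_mem_cell_iff[OF p j u] by auto
  moreover have "d i \<noteq> 0" for i using p by (simp add: d_def)
  ultimately show ?thesis
    using emeasure_lborel_diagonal_affine[of d "torus \<inter> chart u -` cell p j" s]
    by (simp add: param jacobian)
qed

definition slab_average :: "(real^'m \<Rightarrow> (real^'m) set) \<Rightarrow> real" where
  "slab_average Z = enn2real (\<Sum>u\<in>offsets. ennreal (1 / real (card offsets)) * (\<Sum>z\<in>Z u. emeasure lborel (slab z)))"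

lemma lam_eq_slab_average:
  assumes p: "0 < p" and j: "j \<in> Zp_grid p"
  shows "lam L p j = slab_average (cell_lattice p j)"
proof -
  define k where "k = CARD('m) - CARD('r)"
  define c where "c = ennreal (1 / real (card offsets))"
  have cell_ker: "cell p j \<inter> torus_ker L \<in> sets borel" by measurable
  have "emeasure haar_model (cell p j \<inter> torus_ker L) =
      c * (\<Sum>u\<in>offsets. ennreal ((1 / real p) ^ k) * emeasure lborel {t. cell_condition p j u t})"
    unfolding emeasure_haar_model[OF cell_ker] c_def k_def
    by (intro arg_cong[where f="\<lambda>x. _ * x"] sum.cong refl emeasure_torus_chart_cell p j)
  also have "\<dots> = ennreal ((1 / real p) ^ k) * (\<Sum>u\<in>offsets. c * (\<Sum>z\<in>cell_lattice p j u. emeasure lborel (slab z)))"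
    by (simp add: emeasure_cell_condition[OF p] sum_distrib_left mult.left_commute)
  finally have "mu_L L (cell p j \<inter> torus_ker L) =
      (1 / real p) ^ k * slab_average (cell_lattice p j)"
    by (simp add: mu_L_def measure_def haar_ker_eq_haar_model slab_average_def c_def enn2real_mult)
  then show ?thesis
    using p by (simp add: lam_def k_def power_one_over)
qed

definition slab_averages :: "real set" where
  "slab_averages = slab_average ` (Pi\<^sub>E offsets (\<lambda>_. Pow lattice_points))"

lemma finite_slab_averages: "finite slab_averages"
  unfolding slab_averages_def
  by (intro finite_imageI finite_PiE finite_offsets) (simp add: finite_lattice_points)

lemma lam_in_slab_averages:
  assumes "0 < p" "j \<in> Zp_grid p"
  shows "lam L p j \<in> slab_averages"
proof -
  have "slab_average (cell_lattice p j) = slab_average (restrict (cell_lattice p j) offsets)"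
    by (simp add: slab_average_def)
  moreover have "restrict (cell_lattice p j) offsets \<in> Pi\<^sub>E offsets (\<lambda>_. Pow lattice_points)"
    using cell_lattice_subset_lattice_points by auto
  ultimately show ?thesis
    unfolding lam_eq_slab_average[OF assms] slab_averages_def by blast
qed

end

theorem lemma3p4:
  fixes L :: "int^'m^'r"
  assumes "rank (realmat L) = CARD('r)"
  shows "\<exists>\<Lambda>::real set. finite \<Lambda> \<and> (\<forall>x\<in>\<Lambda>. x > 0) \<and>
    (\<exists>p0::int. \<forall>p::nat. int p \<ge> p0 \<longrightarrow>
       {lam L p j | j. j \<in> Zp_grid p \<and> div_vec j p \<in> J_set L p} \<subseteq> \<Lambda>)"
proof -
  obtain I R where "ker_pivots L I R"
    using full_rank_pivot_right_inverse[OF assms] by (metis ker_pivots.intro)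
  then interpret ker_pivots L I R .
  have lam_mem: "lam L p j \<in> {x \<in> slab_averages. x > 0}"
    if "0 < p" "j \<in> Zp_grid p" "div_vec j p \<in> J_set L p" for p j
    using that lam_in_slab_averages lam_pos_if_mem_J_set by blast
  show ?thesis
  proof (intro exI conjI)
    show "finite {x \<in> slab_averages. x > 0}" using finite_slab_averages by simp
    show "\<forall>x\<in>{x \<in> slab_averages. x > 0}. x > 0" by simp
    show "\<forall>p::nat. int p \<ge> 1 \<longrightarrow>
        {lam L p j | j. j \<in> Zp_grid p \<and> div_vec j p \<in> J_set L p} \<subseteq> {x \<in> slab_averages. x > 0}"
      using lam_mem by force
  qed
qed

end
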